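(* Let $n\ge1$ and let $d>n+1$ be a prime. Let $A_1=\dots=A_n=C_1=\dots=C_n=\mathbb{C}^d$ with computational basis $\{|0\rangle,\dots,|d-1\rangle\}$, and let $M_n=I_n+E_n$ be the $n\times n$ matrix with $2$ on the diagonal and $1$ everywhere else ($I_n$ the identity, $E_n$ the all-ones matrix). Then $U_{d,n}|\vec x\rangle=|M_n\vec x\rangle$, where $|\vec x\rangle=|x_1\rangle\cdots|x_n\rangle$ for $\vec x\in\{0,\dots,d-1\}^n$ and all arithmetic is modulo $d$, defines a maximally $I_3$-scrambling unitary $U_{d,n}:A_1\otimes\cdots\otimes A_n\to C_1\otimes\cdots\otimes C_n$, i.e. \[ I_3(A_i;A_i^c;C_j)=-2\log\min\{|A_i|,|A_i^c|,|C_j|,|C_j^c|\}\quad\text{for all }i,j. \]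
   Context: The Choi state of $U$ is $\rho=U_{A_1'\dots A_n'\to C_1\dots C_n}\bigl(\bigotimes_i\Phi^+_{A_iA_i'}\bigr)U^\dagger$, with $\Phi^+_{XX'}=|X|^{-1/2}\sum_k|kk\rangle$; informations are evaluated on it. $A_i^c$ (resp. $C_j^c$) denotes the composite of all input (resp. output) systems other than $A_i$ (resp. $C_j$), and $|X|$ denotes dimension. Entropies are von Neumann (base-2), $I(X;Y)=S(X)+S(Y)-S(XY)$, $I_3(X;Y;Z)=I(X;Y)+I(X;Z)-I(X;YZ)$. *)

theory Defs
  imports "Jordan_Normal_Form.Schur_Decomposition" "Jordan_Normal_Form.Char_Poly"
          "HOL-Computational_Algebra.Polynomial"
begin

text \<open>Systems are numbered 0..<2n: system k < n is A_(k+1), system n+k is C_(k+1).  A basis state of a set S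
  of systems is a function g :: nat => nat with g k < d on S and g k = 0 off S.\<close>

definition configs :: "nat \<Rightarrow> nat set \<Rightarrow> (nat \<Rightarrow> nat) set" where
  "configs d S = {g. (\<forall>k\<in>S. g k < d) \<and> (\<forall>k. k \<notin> S \<longrightarrow> g k = 0)}"

text \<open>Encoding of basis states of a system set S as indices in {0..<d^card S}
  (mixed radix, in increasing order of system labels), and decoding.\<close>

definition sys_enc :: "nat \<Rightarrow> nat set \<Rightarrow> (nat \<Rightarrow> nat) \<Rightarrow> nat" where
  "sys_enc d S g = (\<Sum>k\<in>S. g k * d ^ card {l\<in>S. l < k})"

definition sys_dec :: "nat \<Rightarrow> nat set \<Rightarrow> nat \<Rightarrow> (nat \<Rightarrow> nat)" where
  "sys_dec d S r = (\<lambda>k. if k \<in> S then r div d ^ card {l\<in>S. l < k} mod d else 0)"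

definition unitary_mat :: "complex mat \<Rightarrow> bool" where
  "unitary_mat U \<longleftrightarrow> (\<exists>N. U \<in> carrier_mat N N \<and>
      U * mat_adjoint U = 1\<^sub>m N \<and> mat_adjoint U * U = 1\<^sub>m N)"

text \<open>The unitary U_{d,n}: |x> |-> |M_n x mod d|, with M_n = I_n + E_n, i.e.
  (M_n x)_k = x_k + sum_l x_l.  Input systems A_1..A_n are labels 0..<n,
  output systems likewise indexed 0..<n (as an operator on (C^d)^{\<otimes>n}).\<close>

definition Mvec :: "nat \<Rightarrow> nat \<Rightarrow> (nat \<Rightarrow> nat) \<Rightarrow> (nat \<Rightarrow> nat)" where
  "Mvec d n x = (\<lambda>k. if k < n then (x k + (\<Sum>l<n. x l)) mod d else 0)"

definition U_dn :: "nat \<Rightarrow> nat \<Rightarrow> complex mat" where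
  "U_dn d n = mat (d ^ n) (d ^ n)
     (\<lambda>(r, c). if sys_dec d {..<n} r = Mvec d n (sys_dec d {..<n} c) then 1 else 0)"

text \<open>Choi state of a unitary U on n input systems A_1..A_n (labels 0..<n) to n output
  systems C_1..C_n (labels n..<2n): the pure state
  (U_{A'->C} \<otimes> id_A)(\<otimes>_i \<Phi>^+_{A_i A_i'}) =
   d^{-n/2} \<Sum>_{x,y} <y|U|x> |x>_A |y>_C ; we give its coefficient on the basis state g.\<close>

definition choi_vec :: "nat \<Rightarrow> nat \<Rightarrow> complex mat \<Rightarrow> (nat \<Rightarrow> nat) \<Rightarrow> complex" where
  "choi_vec d n U g =
     U $$ (sys_enc d {..<n} (\<lambda>k. g (n + k)), sys_enc d {..<n} g) / complex_of_real (sqrt (real d ^ n))"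

text \<open>Reduced density matrix on the systems S \<subseteq> {..<N} of the pure state |psi><psi|
  (partial trace over {..<N} - S), as a d^|S| x d^|S| matrix.\<close>

definition reduced_state ::
  "nat \<Rightarrow> nat \<Rightarrow> ((nat \<Rightarrow> nat) \<Rightarrow> complex) \<Rightarrow> nat set \<Rightarrow> complex mat" where
  "reduced_state d N psi S = mat (d ^ card S) (d ^ card S)
     (\<lambda>(r, c). \<Sum>h\<in>configs d ({..<N} - S).
        psi (\<lambda>k. sys_dec d S r k + h k) * cnj (psi (\<lambda>k. sys_dec d S c k + h k)))"

text \<open>Von Neumann entropy (base 2) of a density matrix: - \<Sum> \<lambda> log2 \<lambda> over its eigenvalues
  counted with algebraic multiplicity (roots of the characteristic polynomial);
  eigenvalues of a density matrix are real and nonnegative, 0 log 0 = 0.\<close>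

definition vn_entropy :: "complex mat \<Rightarrow> real" where
  "vn_entropy \<rho> = - sum_mset (image_mset (\<lambda>\<mu>. if Re \<mu> = 0 then 0 else Re \<mu> * log 2 (Re \<mu>))
      (proots (char_poly \<rho>)))"

definition ent :: "nat \<Rightarrow> nat \<Rightarrow> ((nat \<Rightarrow> nat) \<Rightarrow> complex) \<Rightarrow> nat set \<Rightarrow> real" where
  "ent d N psi X = vn_entropy (reduced_state d N psi X)"

definition mutual_info ::
  "nat \<Rightarrow> nat \<Rightarrow> ((nat \<Rightarrow> nat) \<Rightarrow> complex) \<Rightarrow> nat set \<Rightarrow> nat set \<Rightarrow> real" where
  "mutual_info d N psi X Y = ent d N psi X + ent d N psi Y - ent d N psi (X \<union> Y)"

definition tripartite_info ::
  "nat \<Rightarrow> nat \<Rightarrow> ((nat \<Rightarrow> nat) \<Rightarrow> complex) \<Rightarrow> nat set \<Rightarrow> nat set \<Rightarrow> nat set \<Rightarrow> real" where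
  "tripartite_info d N psi X Y Z =
     mutual_info d N psi X Y + mutual_info d N psi X Z - mutual_info d N psi X (Y \<union> Z)"

end

theory Submission
  imports Defs "HOL-Number_Theory.Cong"
begin

text \<open>The Choi state of the permutation unitary \<open>x \<mapsto> M\<^sub>n x\<close> is the uniform superposition of the
  basis states \<open>|x\<rangle>\<^sub>A |M\<^sub>n x\<rangle>\<^sub>C\<close>. Split such a basis state into its part on a set \<open>S\<close> of systems and
  its part on the complement. When one part determines the whole state and the other has fibres of
  a common size \<open>\<alpha>\<close>, the reduced state on \<open>S\<close> is \<open>\<alpha> / d\<^sup>n\<close> times a projection, so its entropy is
  \<open>log (d\<^sup>n / \<alpha>)\<close>. Since \<open>d\<close> is a prime exceeding \<open>n + 1\<close>, \<open>M\<^sub>n = I\<^sub>n + E\<^sub>n\<close> and the relevant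
  submatrices are invertible modulo \<open>d\<close>, and counting solutions of the resulting linear systems gives
  every entropy occurring in \<open>I\<^sub>3(A\<^sub>i; A\<^sub>i\<^sup>c; C\<^sub>j)\<close> as a multiple of \<open>log d\<close>. All of them cancel
  except \<open>S(A\<^sub>i C\<^sub>j)\<close>, which is \<open>2 log d\<close>, or \<open>0\<close> when \<open>n = 1\<close>.\<close>

section \<open>Traces, projections and permutation matrices\<close>

definition mat_trace :: "'a::comm_ring_1 mat \<Rightarrow> 'a" where
  "mat_trace A = (\<Sum>i<dim_row A. A $$ (i, i))"

lemma mat_trace_mult_comm:
  fixes X Y :: "'a::comm_ring_1 mat"
  assumes "X \<in> carrier_mat m k" "Y \<in> carrier_mat k m"
  shows "mat_trace (X * Y) = mat_trace (Y * X)"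
proof -
  have "mat_trace (X * Y) = (\<Sum>i<m. \<Sum>j<k. X $$ (i, j) * Y $$ (j, i))"
    using assms by (simp add: mat_trace_def scalar_prod_def atLeast0LessThan)
  also have "\<dots> = (\<Sum>j<k. \<Sum>i<m. Y $$ (j, i) * X $$ (i, j))"
    by (subst sum.swap) (simp add: mult.commute)
  also have "\<dots> = mat_trace (Y * X)"
    using assms by (simp add: mat_trace_def scalar_prod_def atLeast0LessThan)
  finally show ?thesis .
qed

lemma mat_trace_similar:
  assumes "similar_mat_wit A B P Q" "A \<in> carrier_mat m m"
  shows "mat_trace A = mat_trace B"
proof -
  note D = similar_mat_witD2[OF assms(2,1)]
  have "mat_trace A = mat_trace (P * (B * Q))"
    using D by (simp add: assoc_mult_mat[of _ m m _ m _ m])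
  also have "\<dots> = mat_trace (B * Q * P)"
    using D by (subst mat_trace_mult_comm[of _ m m]) (auto simp: assoc_mult_mat[of _ m m _ m _ m])
  also have "\<dots> = mat_trace B"
    using D by (simp add: assoc_mult_mat[of _ m m _ m _ m])
  finally show ?thesis .
qed

lemma similar_mat_wit_mult_self_smult:
  fixes A :: "'a::comm_ring_1 mat"
  assumes sim: "similar_mat_wit A B P Q" and A: "A \<in> carrier_mat m m" and sq: "A * A = c \<cdot>\<^sub>m A"
  shows "B * B = c \<cdot>\<^sub>m B"
proof -
  note D = similar_mat_witD2[OF A sim]
  have B_eq: "B = Q * A * P"
    using similar_mat_witD2[OF D(5) similar_mat_wit_sym[OF sim]] by simp
  have "B * B = Q * A * (P * Q) * A * P"
    using D(6,7) A by (simp add: B_eq assoc_mult_mat[of _ m m _ m _ m])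
  also have "\<dots> = Q * (A * A) * P"
    using D(1,6,7) A by (simp add: assoc_mult_mat[of _ m m _ m _ m])
  also have "\<dots> = c \<cdot>\<^sub>m (Q * A * P)"
    using D(6,7) A by (simp add: sq mult_smult_distrib[of _ m m] mult_smult_assoc_mat[of _ m m])
  finally show ?thesis by (simp add: B_eq)
qed

lemma upper_triangular_mult_diag:
  assumes "upper_triangular B" "B \<in> carrier_mat m m" "i < m"
  shows "(B * B) $$ (i, i) = B $$ (i, i) * B $$ (i, i)"
proof -
  have "(B * B) $$ (i, i) = (\<Sum>k<m. B $$ (i, k) * B $$ (k, i))"
    using assms by (simp add: scalar_prod_def atLeast0LessThan)
  also have "\<dots> = B $$ (i, i) * B $$ (i, i) + (\<Sum>k\<in>{..<m} - {i}. B $$ (i, k) * B $$ (k, i))"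
    using assms(3) by (subst sum.remove[of _ i]) auto
  also have "(\<Sum>k\<in>{..<m} - {i}. B $$ (i, k) * B $$ (k, i)) = 0"
  proof (intro sum.neutral ballI)
    fix k assume "k \<in> {..<m} - {i}"
    then consider "k < i" | "i < k" "k < m" by fastforce
    then show "B $$ (i, k) * B $$ (k, i) = 0"
      by cases (use assms in \<open>auto simp: upper_triangular_def\<close>)
  qed
  finally show ?thesis by simp
qed

lemma proots_prod_linear_factors: "proots (\<Prod>a\<leftarrow>as. [:- a, 1:]) = mset (as :: complex list)"
proof (induct as)
  case (Cons a as)
  have "(\<Prod>a\<leftarrow>as. [:- a, 1:]) \<noteq> 0" by (auto simp: prod_list_zero_iff)
  then have "proots (\<Prod>a\<leftarrow>a # as. [:- a, 1:]) = proots [:- a, 1:] + proots (\<Prod>a\<leftarrow>as. [:- a, 1:])"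
    by (simp only: list.map prod_list.Cons, intro proots_mult) auto
  with Cons show ?case using proots_linear_factor[of "-a"] by simp
qed simp

text \<open>The eigenvalues of \<open>A\<close> are roots of \<open>\<mu>\<^sup>2 = l \<mu>\<close>, and the trace forces exactly
  \<open>1 / l\<close> of them to equal \<open>l\<close>.\<close>

lemma vn_entropy_scaled_projection:
  assumes A: "A \<in> carrier_mat m m" and sq: "A * A = complex_of_real l \<cdot>\<^sub>m A"
    and l: "0 < l" and tr: "mat_trace A = 1"
  shows "vn_entropy A = - log 2 l"
proof -
  obtain es where cp: "char_poly A = (\<Prod>a\<leftarrow>es. [:- a, 1:])"
    using char_poly_factorized[OF A] by blast
  obtain B P Q where "schur_decomposition A es = (B, P, Q)"
    by (cases "schur_decomposition A es") auto
  from schur_decomposition[OF A cp this] have sim: "similar_mat_wit A B P Q"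
    and ut: "upper_triangular B" and dg: "diag_mat B = es" by auto
  note D = similar_mat_witD2[OF A sim]
  have BB: "B * B = complex_of_real l \<cdot>\<^sub>m B" by (rule similar_mat_wit_mult_self_smult[OF sim A sq])
  have es_vals: "e = 0 \<or> e = complex_of_real l" if "e \<in> set es" for e
  proof -
    from that dg D obtain i where i: "i < m" and e: "e = B $$ (i, i)"
      by (auto simp: diag_mat_def)
    have "e * e = complex_of_real l * e"
      using upper_triangular_mult_diag[OF ut D(5) i] BB D i by (auto simp: e)
    then show ?thesis by (metis mult_cancel_right mult_eq_0_iff)
  qed
  have "sum_list es = mat_trace B"
    using dg D by (auto simp: mat_trace_def diag_mat_def atLeast0LessThan[symmetric] sum_list_sum_nth)
  also have "\<dots> = 1" using mat_trace_similar[OF sim A] tr by simp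
  finally have sum_es: "sum_list es = 1" .
  have "vn_entropy A = - sum_list (map (\<lambda>\<mu>. if Re \<mu> = 0 then 0 else Re \<mu> * log 2 (Re \<mu>)) es)"
    unfolding vn_entropy_def cp proots_prod_linear_factors by (simp add: sum_mset_sum_list flip: mset_map)
  also have "map (\<lambda>\<mu>. if Re \<mu> = 0 then 0 else Re \<mu> * log 2 (Re \<mu>)) es =
      map (\<lambda>\<mu>. Re \<mu> * log 2 l) es"
    using es_vals l by (auto intro!: map_cong) (metis Re_complex_of_real zero_complex.sel(1))
  also have "sum_list \<dots> = Re (sum_list es) * log 2 l"
    by (induct es) (auto simp: algebra_simps)
  finally show ?thesis using sum_es by simp
qed

lemma unitary_permutation_mat:
  assumes "bij_betw \<pi> {..<N} {..<N}"
  shows "unitary_mat (mat N N (\<lambda>(r, c). if r = \<pi> c then 1 else 0))"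
proof -
  let ?U = "mat N N (\<lambda>(r, c). if r = \<pi> c then 1 else (0::complex))"
  have adj: "mat_adjoint ?U = mat N N (\<lambda>(r, c). if c = \<pi> r then 1 else 0)"
    by (rule eq_matI) (simp_all add: mat_adjoint_def mat_of_rows_def cols_def)
  have reindex: "(\<Sum>t<N. g (\<pi> t)) = (\<Sum>u<N. g u)" for g :: "nat \<Rightarrow> complex"
    using sum.reindex_bij_betw[OF assms] .
  have "?U * mat_adjoint ?U = 1\<^sub>m N"
  proof (rule eq_matI)
    fix r s assume "r < dim_row (1\<^sub>m N)" "s < dim_col (1\<^sub>m N)"
    then have "r < N" "s < N" by auto
    have "(?U * mat_adjoint ?U) $$ (r, s) =
        (\<Sum>t<N. (if r = \<pi> t then 1 else 0) * (if s = \<pi> t then 1 else 0))"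
      using \<open>r < N\<close> \<open>s < N\<close> by (simp add: adj scalar_prod_def atLeast0LessThan)
    also have "\<dots> = (\<Sum>u<N. (if r = u then 1 else 0) * (if s = u then 1 else 0))"
      by (rule reindex)
    also have "\<dots> = 1\<^sub>m N $$ (r, s)"
      using \<open>r < N\<close> \<open>s < N\<close> by (simp add: if_distrib[of "\<lambda>x. x * _"] sum.delta cong: if_cong)
    finally show "(?U * mat_adjoint ?U) $$ (r, s) = 1\<^sub>m N $$ (r, s)" .
  qed (simp_all add: adj)
  moreover have "mat_adjoint ?U * ?U = 1\<^sub>m N"
  proof (rule eq_matI)
    fix r s assume "r < dim_row (1\<^sub>m N)" "s < dim_col (1\<^sub>m N)"
    then have "r < N" "s < N" by auto
    have "(mat_adjoint ?U * ?U) $$ (r, s) =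
        (\<Sum>t<N. (if t = \<pi> r then 1 else 0) * (if t = \<pi> s then 1 else 0))"
      using \<open>r < N\<close> \<open>s < N\<close> by (simp add: adj scalar_prod_def atLeast0LessThan)
    also have "\<dots> = (if \<pi> r = \<pi> s then 1 else 0)"
      using bij_betw_apply[OF assms] \<open>s < N\<close>
      by (simp add: if_distrib[of "\<lambda>x. x * _"] sum.delta cong: if_cong)
    also have "\<dots> = 1\<^sub>m N $$ (r, s)"
      using \<open>r < N\<close> \<open>s < N\<close> bij_betw_imp_inj_on[OF assms] by (auto dest: inj_onD)
    finally show "(mat_adjoint ?U * ?U) $$ (r, s) = 1\<^sub>m N $$ (r, s)" .
  qed (simp_all add: adj)
  ultimately show ?thesis unfolding unitary_mat_def by (intro exI[of _ N]) simp
qed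

section \<open>Basis states\<close>

lemma sum_digits_eq_mod: "(\<Sum>p<m. (r div d ^ p mod d) * d ^ p) = r mod (d::nat) ^ m"
proof (induct m)
  case (Suc m)
  have "r mod d ^ Suc m = r mod (d ^ m * d)" by (simp add: mult.commute)
  also have "\<dots> = d ^ m * (r div d ^ m mod d) + r mod d ^ m" by (rule mod_mult2_eq)
  finally show ?case using Suc by (simp add: mult.commute)
qed simp

lemma bij_betw_rank:
  assumes "finite (S::nat set)"
  shows "bij_betw (\<lambda>k. card {l\<in>S. l < k}) S {..<card S}"
proof -
  have inj: "inj_on (\<lambda>k. card {l\<in>S. l < k}) S"
  proof (rule inj_onI, rule ccontr)
    fix k k' assume k: "k \<in> S" "k' \<in> S" and eq: "card {l\<in>S. l < k} = card {l\<in>S. l < k'}" and ne: "k \<noteq> k'"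
    have lt: "card {l\<in>S. l < a} < card {l\<in>S. l < b}" if "a \<in> S" "b \<in> S" "a < b" for a b
      by (rule psubset_card_mono) (use assms that in auto)
    from ne have "k < k' \<or> k' < k" by auto
    then show False using lt[of k k'] lt[of k' k] k eq by auto
  qed
  have sub: "(\<lambda>k. card {l\<in>S. l < k}) ` S \<subseteq> {..<card S}"
  proof
    fix c assume "c \<in> (\<lambda>k. card {l\<in>S. l < k}) ` S"
    then obtain k where k: "k \<in> S" "c = card {l\<in>S. l < k}" by auto
    have "card {l\<in>S. l < k} < card S" by (rule psubset_card_mono) (use assms k in auto)
    then show "c \<in> {..<card S}" using k by auto
  qed
  have "card ((\<lambda>k. card {l\<in>S. l < k}) ` S) = card {..<card S}"
    using card_image[OF inj] by simp
  then have "(\<lambda>k. card {l\<in>S. l < k}) ` S = {..<card S}"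
    using sub by (intro card_subset_eq) auto
  then show ?thesis using inj by (simp add: bij_betw_def)
qed

lemma sys_enc_sys_dec:
  assumes "finite S" "r < d ^ card S"
  shows "sys_enc d S (sys_dec d S r) = r"
proof -
  have "sys_enc d S (sys_dec d S r) =
      (\<Sum>k\<in>S. (r div d ^ card {l\<in>S. l < k} mod d) * d ^ card {l\<in>S. l < k})"
    unfolding sys_enc_def sys_dec_def by (intro sum.cong) auto
  also have "\<dots> = (\<Sum>p<card S. (r div d ^ p mod d) * d ^ p)"
    by (rule sum.reindex_bij_betw[OF bij_betw_rank[OF assms(1)]])
  also have "\<dots> = r" using assms by (simp add: sum_digits_eq_mod)
  finally show ?thesis .
qed

lemma sys_dec_in_configs: "0 < d \<Longrightarrow> sys_dec d S r \<in> configs d S"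
  by (auto simp: sys_dec_def configs_def)

lemma card_configs:
  assumes "finite S"
  shows "card (configs d S) = d ^ card S"
proof -
  have "bij_betw (\<lambda>g. restrict g S) (configs d S) (S \<rightarrow>\<^sub>E {..<d})"
    by (rule bij_betw_byWitness[where f' = "\<lambda>f k. if k \<in> S then f k else 0"])
      (auto simp: configs_def restrict_def PiE_def extensional_def fun_eq_iff)
  then have "card (configs d S) = card (S \<rightarrow>\<^sub>E {..<d})" by (rule bij_betw_same_card)
  with assms show ?thesis by (simp add: card_PiE)
qed

lemma finite_configs: "finite S \<Longrightarrow> 0 < d \<Longrightarrow> finite (configs d S)"
  using card_configs[of S d] by (intro card_ge_0_finite) auto

lemma bij_betw_sys_dec:
  assumes "finite S" "0 < d"
  shows "bij_betw (sys_dec d S) {..<d ^ card S} (configs d S)"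
proof -
  have inj: "inj_on (sys_dec d S) {..<d ^ card S}"
    by (rule inj_on_inverseI[where g = "sys_enc d S"]) (use assms in \<open>auto simp: sys_enc_sys_dec\<close>)
  have "sys_dec d S ` {..<d ^ card S} \<subseteq> configs d S"
    using sys_dec_in_configs[OF assms(2)] by auto
  then have "sys_dec d S ` {..<d ^ card S} = configs d S"
    using card_image[OF inj] card_configs[OF assms(1)] finite_configs[OF assms]
    by (intro card_subset_eq) auto
  with inj show ?thesis by (simp add: bij_betw_def)
qed

lemma sys_dec_sys_enc:
  assumes "finite S" "0 < d" "g \<in> configs d S"
  shows "sys_dec d S (sys_enc d S g) = g"
proof -
  from assms bij_betw_sys_dec[OF assms(1,2)] obtain r where "r < d ^ card S" "g = sys_dec d S r"
    by (auto simp: bij_betw_def)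
  then show ?thesis using sys_enc_sys_dec[OF assms(1)] by simp
qed

lemma bij_betw_sys_enc:
  assumes "finite S" "0 < d"
  shows "bij_betw (sys_enc d S) (configs d S) {..<d ^ card S}"
proof -
  have "sys_enc d S ` configs d S = (\<lambda>r. sys_enc d S (sys_dec d S r)) ` {..<d ^ card S}"
    using bij_betw_imp_surj_on[OF bij_betw_sys_dec[OF assms]] by (metis image_image)
  also have "\<dots> = id ` {..<d ^ card S}"
    by (rule image_cong) (auto simp: sys_enc_sys_dec[OF assms(1)])
  finally have "sys_enc d S ` configs d S = {..<d ^ card S}" by simp
  moreover have "inj_on (sys_enc d S) (configs d S)"
    by (rule inj_on_inverseI[where g = "sys_dec d S"]) (simp add: sys_dec_sys_enc[OF assms])
  ultimately show ?thesis by (simp add: bij_betw_def)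
qed

definition config_restrict :: "nat set \<Rightarrow> (nat \<Rightarrow> nat) \<Rightarrow> nat \<Rightarrow> nat" where
  "config_restrict S g = (\<lambda>k. if k \<in> S then g k else 0)"

lemma config_restrict_in_configs: "0 < d \<Longrightarrow> g \<in> configs d T \<Longrightarrow> config_restrict S g \<in> configs d S"
  by (auto simp: config_restrict_def configs_def)

lemma config_restrict_eq_iff: "config_restrict S g = config_restrict S g' \<longleftrightarrow> (\<forall>k\<in>S. g k = g' k)"
  by (auto simp: config_restrict_def fun_eq_iff)

lemma config_restrict_eq_config:
  "a \<in> configs d S \<Longrightarrow> config_restrict S g = a \<longleftrightarrow> (\<forall>k\<in>S. g k = a k)"
  by (auto simp: config_restrict_def configs_def fun_eq_iff)

lemma config_add_eq_iff:
  assumes "S \<subseteq> U" "a \<in> configs d S" "h \<in> configs d (U - S)" "g \<in> configs d U"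
  shows "(\<lambda>k. a k + h k) = g \<longleftrightarrow> a = config_restrict S g \<and> h = config_restrict (U - S) g"
proof
  assume e: "(\<lambda>k. a k + h k) = g"
  have "a k = config_restrict S g k \<and> h k = config_restrict (U - S) g k" for k
    using fun_cong[OF e, of k] assms by (auto simp: config_restrict_def configs_def)
  then show "a = config_restrict S g \<and> h = config_restrict (U - S) g" by auto
qed (use assms in \<open>auto simp: config_restrict_def configs_def fun_eq_iff\<close>)

lemma config_add_in_configs:
  assumes "S \<subseteq> U" "a \<in> configs d S" "h \<in> configs d (U - S)"
  shows "(\<lambda>k. a k + h k) \<in> configs d U"
proof -
  have "a k + h k < d" if "k \<in> U" for k
    using assms that by (cases "k \<in> S") (auto simp: configs_def)
  then show ?thesis using assms by (auto simp: configs_def)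
qed

lemma card_configs_fixed:
  assumes "finite N" "J \<subseteq> N" "\<forall>k\<in>J. a k < d"
  shows "card {x\<in>configs d N. \<forall>k\<in>J. x k = a k} = d ^ card (N - J)"
proof -
  have "bij_betw (\<lambda>x k. if k \<in> N - J then x k else 0)
      {x\<in>configs d N. \<forall>k\<in>J. x k = a k} (configs d (N - J))"
    by (rule bij_betw_byWitness[where f' = "\<lambda>z k. if k \<in> J then a k else z k"])
      (use assms in \<open>auto simp: configs_def fun_eq_iff\<close>)
  then show ?thesis using assms(1) by (simp add: bij_betw_same_card card_configs)
qed

lemma mod_affine_cancel:
  fixes d :: nat
  assumes "coprime w d" "a < d" "b < d" "(c + w * a) mod d = (c + w * b) mod d"
  shows "a = b"
proof -
  have "[c + w * a = c + w * b] (mod d)" using assms(4) by (simp add: cong_def)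
  then have "[a = b] (mod d)" using assms(1) by (simp add: cong_add_lcancel_nat cong_mult_lcancel_nat)
  then show ?thesis using assms(2,3) by (rule cong_less_modulus_unique_nat)
qed

lemma ex_mod_affine_eq:
  fixes d :: nat
  assumes "coprime w d" "v < d"
  shows "\<exists>t<d. (c + w * t) mod d = v"
proof -
  have inj: "inj_on (\<lambda>t. (c + w * t) mod d) {..<d}"
  proof (rule inj_onI)
    fix a b assume "a \<in> {..<d}" "b \<in> {..<d}" "(c + w * a) mod d = (c + w * b) mod d"
    then show "a = b" by (auto intro: mod_affine_cancel[OF assms(1)])
  qed
  have "0 < d" using assms(2) by simp
  then have "(\<lambda>t. (c + w * t) mod d) ` {..<d} \<subseteq> {..<d}" by auto
  then have "(\<lambda>t. (c + w * t) mod d) ` {..<d} = {..<d}"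
    using card_image[OF inj] by (intro card_subset_eq) auto
  then have "v \<in> (\<lambda>t. (c + w * t) mod d) ` {..<d}" using assms(2) by simp
  then show ?thesis by blast
qed

lemma card_configs_fixed_affine:
  assumes "finite N" "J \<subseteq> N" "i \<in> N - J" "\<forall>k\<in>J. a k < d"
    and "coprime w d" "v < d"
    and lin: "\<And>x t. f (x(i := t)) = f (x(i := 0)) + w * t"
  shows "card {x\<in>configs d N. (\<forall>k\<in>J. x k = a k) \<and> f x mod d = v} = d ^ (card (N - J) - 1)"
proof -
  have d0: "0 < d" using assms(6) by simp
  define sol where "sol c = (SOME t. t < d \<and> (c + w * t) mod d = v)" for c
  have sol: "sol c < d \<and> (c + w * sol c) mod d = v" for c
    unfolding sol_def by (rule someI_ex) (use ex_mod_affine_eq[OF assms(5,6)] in blast)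
  have sol_unique: "t = sol c" if "t < d" "(c + w * t) mod d = v" for t c
    using mod_affine_cancel[OF assms(5) that(1), of "sol c" c] sol[of c] that by auto
  let ?A = "{x\<in>configs d N. (\<forall>k\<in>J. x k = a k) \<and> f x mod d = v}"
  let ?B = "{z\<in>configs d (N - {i}). \<forall>k\<in>J. z k = a k}"
  have "bij_betw (\<lambda>x. x(i := 0)) ?A ?B"
  proof (rule bij_betw_byWitness[where f' = "\<lambda>z. z(i := sol (f z))"])
    show "\<forall>x\<in>?A. (x(i := 0))(i := sol (f (x(i := 0)))) = x"
    proof
      fix x assume x: "x \<in> ?A"
      have "x i = sol (f (x(i := 0)))"
        using x lin[of x "x i"] assms(3) by (intro sol_unique) (auto simp: configs_def)
      then show "(x(i := 0))(i := sol (f (x(i := 0)))) = x" by auto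
    qed
    show "(\<lambda>z. z(i := sol (f z))) ` ?B \<subseteq> ?A"
    proof
      fix y assume "y \<in> (\<lambda>z. z(i := sol (f z))) ` ?B"
      then obtain z where z: "z \<in> ?B" and y: "y = z(i := sol (f z))" by blast
      have "z(i := 0) = z" using z by (auto simp: configs_def fun_eq_iff)
      then have "f y = f z + w * sol (f z)" unfolding y using lin[of z "sol (f z)"] by simp
      then show "y \<in> ?A" using z y assms(3) sol by (auto simp: configs_def)
    qed
    show "\<forall>z\<in>?B. (z(i := sol (f z)))(i := 0) = z"
      by (auto simp: configs_def fun_eq_iff)
    show "(\<lambda>x. x(i := 0)) ` ?A \<subseteq> ?B"
      using assms(3) d0 by (auto simp: configs_def split: if_splits)
  qed
  then have "card ?A = card ?B" by (rule bij_betw_same_card)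
  also have "\<dots> = d ^ card (N - {i} - J)"
    using assms by (intro card_configs_fixed) auto
  also have "N - {i} - J = (N - J) - {i}" by auto
  finally show ?thesis using assms(1,3) by simp
qed

section \<open>The matrix \<open>M\<^sub>n\<close> modulo \<open>d\<close>\<close>

lemma Mvec_in_configs: "0 < d \<Longrightarrow> Mvec d n x \<in> configs d {..<n}"
  by (auto simp: Mvec_def configs_def)

lemma Mvec_eq_imp_dvd:
  assumes "k < n" "Mvec d n x k = Mvec d n y k"
  shows "int d dvd (int (x k) - int (y k)) + (\<Sum>l<n. int (x l) - int (y l))"
proof -
  have "(x k + (\<Sum>l<n. x l)) mod d = (y k + (\<Sum>l<n. y l)) mod d"
    using assms by (simp add: Mvec_def)
  then have "int (x k + (\<Sum>l<n. x l)) mod int d = int (y k + (\<Sum>l<n. y l)) mod int d"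
    by (metis of_nat_mod)
  then have "int d dvd int (x k + (\<Sum>l<n. x l)) - int (y k + (\<Sum>l<n. y l))"
    by (simp add: mod_eq_dvd_iff)
  then show ?thesis by (simp add: sum_subtractf algebra_simps)
qed

lemma configs_eqI_dvd:
  assumes "x \<in> configs d N" "y \<in> configs d N" "\<And>k. k \<in> N \<Longrightarrow> int d dvd int (x k) - int (y k)"
  shows "x = y"
proof
  fix k show "x k = y k"
  proof (cases "k \<in> N")
    case True
    then have "x k < d" "y k < d" using assms(1,2) by (auto simp: configs_def)
    then have "\<bar>int (x k) - int (y k)\<bar> < int d" by (auto simp: abs_if)
    with assms(3)[OF True] have "int (x k) - int (y k) = 0"
      using dvd_imp_le_int[of "int (x k) - int (y k)" "int d"] by fastforce
    then show ?thesis by simp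
  qed (use assms(1,2) in \<open>auto simp: configs_def\<close>)
qed

text \<open>With \<open>e = x - y\<close> and \<open>s = \<Sum>e\<close>, equal images give \<open>e\<^sub>k + s \<equiv> 0\<close> for every \<open>k\<close>;
  summing yields \<open>(n + 1) s \<equiv> 0\<close>, and \<open>n + 1\<close> is a unit modulo the prime \<open>d > n + 1\<close>.\<close>

lemma Mvec_inj_on:
  assumes "prime d" "n + 1 < d"
  shows "inj_on (Mvec d n) (configs d {..<n})"
proof (rule inj_onI)
  fix x y assume x: "x \<in> configs d {..<n}" and y: "y \<in> configs d {..<n}"
    and eq: "Mvec d n x = Mvec d n y"
  define e where "e k = int (x k) - int (y k)" for k
  define s where "s = (\<Sum>l<n. e l)"
  have dk: "int d dvd e k + s" if "k < n" for k
    using Mvec_eq_imp_dvd[OF that, of d x y] eq by (simp add: e_def s_def)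
  have "int d dvd (\<Sum>k<n. e k + s)" by (rule dvd_sum) (use dk in auto)
  then have "int d dvd (int n + 1) * s" by (simp add: sum.distrib s_def[symmetric] algebra_simps)
  moreover have "\<not> int d dvd int n + 1"
    using assms(2) by (auto dest: zdvd_imp_le)
  ultimately have "int d dvd s"
    using prime_dvd_mult_iff[of "int d"] assms(1) by auto
  then show "x = y"
    using x y dk by (intro configs_eqI_dvd[OF x y]) (auto simp: e_def dvd_add_left_iff)
qed

text \<open>Same argument when \<open>x\<^sub>i = y\<^sub>i\<close> replaces the \<open>j\<close>-th output: for \<open>i \<noteq> j\<close> the
  \<open>i\<close>-th output gives \<open>s \<equiv> 0\<close> directly, for \<open>i = j\<close> summing gives \<open>n s \<equiv> 0\<close>.\<close>

lemma Mvec_inj_on_minor: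
  assumes p: "prime d" and dn: "n + 1 < d" and i: "i < n" and j: "j < n"
    and x: "x \<in> configs d {..<n}" and y: "y \<in> configs d {..<n}"
    and xi: "x i = y i" and M: "\<And>k. k < n \<Longrightarrow> k \<noteq> j \<Longrightarrow> Mvec d n x k = Mvec d n y k"
  shows "x = y"
proof -
  define e where "e k = int (x k) - int (y k)" for k
  define s where "s = (\<Sum>l<n. e l)"
  have dk: "int d dvd e k + s" if "k < n" "k \<noteq> j" for k
    using Mvec_eq_imp_dvd[OF that(1) M[OF that]] by (simp add: e_def s_def)
  have ei: "e i = 0" using xi by (simp add: e_def)
  have s_split: "s = e m + (\<Sum>k\<in>{..<n} - {m}. e k)" if "m < n" for m
    unfolding s_def using that by (subst sum.remove[of "{..<n}" m]) auto
  have ds: "int d dvd s"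
  proof (cases "i = j")
    case False
    then show ?thesis using dk[OF i] ei by simp
  next
    case True
    have "int d dvd (\<Sum>k\<in>{..<n} - {i}. e k + s)" by (rule dvd_sum) (use dk True in auto)
    also have "(\<Sum>k\<in>{..<n} - {i}. e k + s) = int n * s"
      using i s_split[OF i] ei by (simp add: sum.distrib of_nat_diff algebra_simps)
    finally have "int d dvd int n * s" .
    moreover have "\<not> int d dvd int n"
      using i dn by (auto dest!: dvd_imp_le)
    ultimately show ?thesis using prime_dvd_mult_iff[of "int d"] p by auto
  qed
  have other: "int d dvd e k" if "k < n" "k \<noteq> j" for k
    using dk[OF that] ds by (simp add: dvd_add_left_iff)
  have "int d dvd e j"
  proof -
    have "int d dvd (\<Sum>k\<in>{..<n} - {j}. e k)" by (rule dvd_sum) (use other in auto)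
    with ds have "int d dvd s - (\<Sum>k\<in>{..<n} - {j}. e k)" by (rule dvd_diff)
    then show ?thesis using s_split[OF j] by simp
  qed
  then show ?thesis
    using other by (intro configs_eqI_dvd[OF x y]) (auto simp: e_def)
qed

lemma bij_betw_Mvec:
  assumes "prime d" "n + 1 < d"
  shows "bij_betw (Mvec d n) (configs d {..<n}) (configs d {..<n})"
proof -
  have "Mvec d n ` configs d {..<n} = configs d {..<n}"
    using card_image[OF Mvec_inj_on[OF assms]] Mvec_in_configs[of d n] finite_configs[of "{..<n}" d]
      assms(2) by (intro card_subset_eq) auto
  with Mvec_inj_on[OF assms] show ?thesis by (simp add: bij_betw_def)
qed

lemma card_Mvec_agree_off:
  assumes p: "prime d" and dn: "n + 1 < d" and j: "j < n" and x: "x \<in> configs d {..<n}"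
  shows "card {y\<in>configs d {..<n}. \<forall>k\<in>{..<n} - {j}. Mvec d n y k = Mvec d n x k} = d"
proof -
  let ?X = "configs d {..<n}"
  let ?Y = "{y\<in>?X. \<forall>k\<in>{..<n} - {j}. Mvec d n y k = Mvec d n x k}"
  have d0: "0 < d" using dn by simp
  have img: "Mvec d n ` ?Y = {z\<in>?X. \<forall>k\<in>{..<n} - {j}. z k = Mvec d n x k}"
  proof (intro equalityI subsetI)
    fix z assume z: "z \<in> {z\<in>?X. \<forall>k\<in>{..<n} - {j}. z k = Mvec d n x k}"
    then obtain y where "y \<in> ?X" "z = Mvec d n y"
      using bij_betw_imp_surj_on[OF bij_betw_Mvec[OF p dn]] by blast
    with z show "z \<in> Mvec d n ` ?Y" by blast
  next
    fix z assume "z \<in> Mvec d n ` ?Y"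
    then show "z \<in> {z\<in>?X. \<forall>k\<in>{..<n} - {j}. z k = Mvec d n x k}"
      using Mvec_in_configs[OF d0] by blast
  qed
  have "inj_on (Mvec d n) ?Y"
    using Mvec_inj_on[OF p dn] by (rule inj_on_subset) blast
  then have "card ?Y = card (Mvec d n ` ?Y)" by (rule card_image[symmetric])
  also have "\<dots> = d ^ card ({..<n} - ({..<n} - {j}))"
    unfolding img using d0 by (intro card_configs_fixed) (auto simp: Mvec_def)
  also have "\<dots> = d" using j by (simp add: Diff_Diff_Int)
  finally show ?thesis .
qed

lemma coprime_one_or_two:
  assumes "prime d" "2 < d"
  shows "coprime (if b then 2 else 1) (d::nat)"
proof -
  have "\<not> d dvd 2" using assms(2) by (auto dest: dvd_imp_le)
  then have "coprime d 2" using prime_imp_coprime[OF assms(1)] by blast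
  then show ?thesis by (simp add: coprime_commute)
qed

lemma affine_Mvec_upd:
  fixes x :: "nat \<Rightarrow> nat"
  assumes "i < n"
  shows "(x(i := t)) j + (\<Sum>l<n. (x(i := t)) l) =
    (x(i := 0)) j + (\<Sum>l<n. (x(i := 0)) l) + (if i = j then 2 else 1) * t"
proof -
  have "(\<Sum>l<n. (x(i := t)) l) = t + (\<Sum>l\<in>{..<n} - {i}. x l)"
    using assms by (subst sum.remove[of _ i]) (auto intro!: sum.cong)
  moreover have "(\<Sum>l<n. (x(i := 0)) l) = (\<Sum>l\<in>{..<n} - {i}. x l)"
    using assms by (subst sum.remove[of _ i]) (auto intro!: sum.cong)
  ultimately show ?thesis by auto
qed

text \<open>\<open>x\<^sub>i\<close> enters the \<open>k\<close>-th output with coefficient 1 or 2, a unit modulo \<open>d\<close>.\<close>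

lemma Mvec_eq_agree_off_imp_eq:
  assumes p: "prime d" and d2: "2 < d" and i: "i < n" and k: "k < n"
    and x: "x \<in> configs d {..<n}" and y: "y \<in> configs d {..<n}"
    and off_i: "\<And>l. l \<noteq> i \<Longrightarrow> x l = y l" and M: "Mvec d n x k = Mvec d n y k"
  shows "x = y"
proof -
  have "x(i := 0) = y(i := 0)" using off_i by auto
  with M k have eq: "((x(i := 0)) k + (\<Sum>l<n. (x(i := 0)) l) + (if i = k then 2 else 1) * x i) mod d =
      ((x(i := 0)) k + (\<Sum>l<n. (x(i := 0)) l) + (if i = k then 2 else 1) * y i) mod d"
    using affine_Mvec_upd[OF i, of x "x i" k] affine_Mvec_upd[OF i, of y "y i" k]
    by (simp add: Mvec_def)
  have "x i = y i"
    by (rule mod_affine_cancel[OF coprime_one_or_two[OF p d2] _ _ eq])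
      (use x y i in \<open>auto simp: configs_def\<close>)
  then show ?thesis by (metis ext off_i)
qed

lemma card_configs_fixed_Mvec:
  assumes "prime d" "2 < d" "J \<subseteq> {..<n}" "i \<in> {..<n} - J" "j < n" "\<forall>k\<in>J. a k < d" "v < d"
  shows "card {x\<in>configs d {..<n}. (\<forall>k\<in>J. x k = a k) \<and> Mvec d n x j = v} = d ^ (n - card J - 1)"
proof -
  have "{x\<in>configs d {..<n}. (\<forall>k\<in>J. x k = a k) \<and> Mvec d n x j = v} =
      {x\<in>configs d {..<n}. (\<forall>k\<in>J. x k = a k) \<and> (x j + (\<Sum>l<n. x l)) mod d = v}"
    using assms(5) by (simp add: Mvec_def)
  also have "card \<dots> = d ^ (card ({..<n} - J) - 1)"
  proof (rule card_configs_fixed_affine[where w = "if i = j then 2 else 1"])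
    show "(\<lambda>x. x j + (\<Sum>l<n. x l)) (x(i := t)) =
        (\<lambda>x. x j + (\<Sum>l<n. x l)) (x(i := 0)) + (if i = j then 2 else 1) * t"
      for x :: "nat \<Rightarrow> nat" and t
      using affine_Mvec_upd[of i n x t j] assms(4) by simp
  qed (use assms coprime_one_or_two in auto)
  finally show ?thesis using assms(3) by (simp add: card_Diff_subset finite_subset)
qed

lemma U_dn_permutation_mat:
  assumes "0 < d"
  shows "U_dn d n = mat (d ^ n) (d ^ n)
    (\<lambda>(r, c). if r = sys_enc d {..<n} (Mvec d n (sys_dec d {..<n} c)) then 1 else 0)"
proof -
  have "sys_dec d {..<n} r = Mvec d n (sys_dec d {..<n} c) \<longleftrightarrow>
      r = sys_enc d {..<n} (Mvec d n (sys_dec d {..<n} c))" if "r < d ^ n" for r c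
    using that sys_enc_sys_dec[of "{..<n}" r d] sys_dec_sys_enc[of "{..<n}" d]
      Mvec_in_configs[OF assms] assms by auto
  then show ?thesis unfolding U_dn_def by (intro eq_matI) auto
qed

lemma unitary_U_dn:
  assumes "prime d" "n + 1 < d"
  shows "unitary_mat (U_dn d n)"
proof -
  have d0: "0 < d" using assms(2) by simp
  have "bij_betw (sys_enc d {..<n} \<circ> Mvec d n \<circ> sys_dec d {..<n}) {..<d ^ n} {..<d ^ n}"
    using bij_betw_sys_dec[of "{..<n}" d] bij_betw_Mvec[OF assms] bij_betw_sys_enc[of "{..<n}" d] d0
    by (auto intro!: bij_betw_trans)
  then show ?thesis
    unfolding U_dn_permutation_mat[OF d0] using unitary_permutation_mat by (simp add: comp_def)
qed

section \<open>Uniform superpositions of basis states\<close>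

definition reduced_kernel ::
  "nat \<Rightarrow> nat \<Rightarrow> ((nat \<Rightarrow> nat) \<Rightarrow> complex) \<Rightarrow> nat set \<Rightarrow>
    (nat \<Rightarrow> nat) \<Rightarrow> (nat \<Rightarrow> nat) \<Rightarrow> complex"
  where "reduced_kernel d N psi S a b =
    (\<Sum>h\<in>configs d ({..<N} - S). psi (\<lambda>k. a k + h k) * cnj (psi (\<lambda>k. b k + h k)))"

lemma ent_eq_scaled_projection_kernel:
  fixes d N :: nat and psi S l and K
  defines "K \<equiv> reduced_kernel d N psi S"
  assumes "finite S" "0 < d"
    and sq: "\<And>a c. a \<in> configs d S \<Longrightarrow> c \<in> configs d S \<Longrightarrow>
      (\<Sum>b\<in>configs d S. K a b * K b c) = complex_of_real l * K a c"
    and tr: "(\<Sum>a\<in>configs d S. K a a) = 1" and "0 < l"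
  shows "ent d N psi S = - log 2 l"
proof -
  let ?m = "d ^ card S" and ?dec = "sys_dec d S"
  let ?A = "mat ?m ?m (\<lambda>(r, c). K (?dec r) (?dec c))"
  have bij: "bij_betw ?dec {..<?m} (configs d S)" by (rule bij_betw_sys_dec[OF assms(2,3)])
  have "?A * ?A = complex_of_real l \<cdot>\<^sub>m ?A"
  proof (rule eq_matI)
    fix r s assume "r < dim_row (complex_of_real l \<cdot>\<^sub>m ?A)" "s < dim_col (complex_of_real l \<cdot>\<^sub>m ?A)"
    then have rs: "r < ?m" "s < ?m" by auto
    have "(?A * ?A) $$ (r, s) = (\<Sum>t<?m. K (?dec r) (?dec t) * K (?dec t) (?dec s))"
      using rs by (simp add: scalar_prod_def atLeast0LessThan)
    also have "\<dots> = (\<Sum>b\<in>configs d S. K (?dec r) b * K b (?dec s))"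
      by (rule sum.reindex_bij_betw[OF bij])
    also have "\<dots> = complex_of_real l * K (?dec r) (?dec s)"
      using sys_dec_in_configs[OF assms(3)] by (intro sq)
    finally show "(?A * ?A) $$ (r, s) = (complex_of_real l \<cdot>\<^sub>m ?A) $$ (r, s)" using rs by simp
  qed auto
  moreover have "mat_trace ?A = 1"
    using tr sum.reindex_bij_betw[OF bij, of "\<lambda>a. K a a"] by (simp add: mat_trace_def)
  ultimately have "vn_entropy ?A = - log 2 l"
    using assms(6) by (intro vn_entropy_scaled_projection) auto
  then show ?thesis by (simp add: ent_def reduced_state_def reduced_kernel_def K_def)
qed

locale uniform_superposition =
  fixes d N :: nat and G :: "(nat \<Rightarrow> nat) set" and psi :: "(nat \<Rightarrow> nat) \<Rightarrow> complex"
  assumes d_pos: "0 < d"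
    and G_configs: "G \<subseteq> configs d {..<N}"
    and G_nonempty: "G \<noteq> {}"
    and psi_configs: "\<And>g. g \<in> configs d {..<N} \<Longrightarrow>
      psi g = (if g \<in> G then 1 else 0) / complex_of_real (sqrt (real (card G)))"
begin

lemma finite_G: "finite G"
  using G_configs finite_configs[OF _ d_pos] finite_subset by blast

lemma reduced_kernel_eq_card:
  assumes S: "S \<subseteq> {..<N}" and a: "a \<in> configs d S" and b: "b \<in> configs d S"
  shows "reduced_kernel d N psi S a b =
    of_nat (card {h\<in>configs d ({..<N} - S).
        (\<exists>g\<in>G. a = config_restrict S g \<and> h = config_restrict ({..<N} - S) g) \<and>
        (\<exists>g\<in>G. b = config_restrict S g \<and> h = config_restrict ({..<N} - S) g)}) / of_nat (card G)"
proof -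
  let ?T = "{..<N} - S"
  let ?P = "\<lambda>c h. \<exists>g\<in>G. c = config_restrict S g \<and> h = config_restrict ?T g"
  let ?r = "complex_of_real (sqrt (real (card G)))"
  have psi_add: "psi (\<lambda>k. c k + h k) = (if ?P c h then 1 else 0) / ?r"
    if c: "c \<in> configs d S" and h: "h \<in> configs d ?T" for c h
  proof -
    have "(\<lambda>k. c k + h k) \<in> configs d {..<N}"
      by (rule config_add_in_configs[OF S c h])
    moreover have "(\<lambda>k. c k + h k) \<in> G \<longleftrightarrow> ?P c h"
    proof
      assume "(\<lambda>k. c k + h k) \<in> G"
      with config_add_eq_iff[OF S c h \<open>(\<lambda>k. c k + h k) \<in> configs d {..<N}\<close>]
      show "?P c h" by blast
    next
      assume "?P c h"
      then obtain g where "g \<in> G" "c = config_restrict S g" "h = config_restrict ?T g" by blast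
      with config_add_eq_iff[OF S c h] G_configs have "(\<lambda>k. c k + h k) = g" by blast
      with \<open>g \<in> G\<close> show "(\<lambda>k. c k + h k) \<in> G" by simp
    qed
    ultimately show ?thesis by (simp add: psi_configs)
  qed
  have r_sq: "?r * ?r = of_nat (card G)"
    by (simp flip: of_real_mult)
  have "psi (\<lambda>k. a k + h k) * cnj (psi (\<lambda>k. b k + h k)) =
      (if ?P a h \<and> ?P b h then 1 / of_nat (card G) else 0)" if "h \<in> configs d ?T" for h
  proof -
    have "(if P then 1 else 0) / ?r * cnj ((if Q then 1 else 0) / ?r) =
        (if P \<and> Q then 1 / (?r * ?r) else 0)" for P Q
      by (cases P; cases Q) (simp_all add: complex_cnj_divide)
    then show ?thesis unfolding psi_add[OF a that] psi_add[OF b that] r_sq .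
  qed
  then have "reduced_kernel d N psi S a b =
      (\<Sum>h\<in>configs d ?T. if ?P a h \<and> ?P b h then 1 / of_nat (card G) else 0)"
    unfolding reduced_kernel_def by (intro sum.cong) auto
  also have "\<dots> = of_nat (card {h\<in>configs d ?T. ?P a h \<and> ?P b h}) * (1 / of_nat (card G))"
    using finite_configs[of ?T d] d_pos by (simp add: sum.inter_filter[symmetric])
  finally show ?thesis by simp
qed

lemma card_G_eq_fibres:
  assumes "S \<subseteq> {..<N}" "\<And>a. a \<in> configs d S \<Longrightarrow> card {g\<in>G. config_restrict S g = a} = \<alpha>"
  shows "card G = \<alpha> * d ^ card S"
proof -
  have fS: "finite S" using assms(1) finite_subset by blast
  have "card G = (\<Sum>a\<in>configs d S. card {g\<in>G. config_restrict S g = a})"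
    using sum_fun_comp[of G "configs d S" "config_restrict S" "\<lambda>_. 1::nat"] finite_G
      finite_configs[OF fS d_pos] config_restrict_in_configs[OF d_pos] G_configs by auto
  also have "\<dots> = \<alpha> * d ^ card S" using assms(2) by (simp add: card_configs[OF fS])
  finally show ?thesis .
qed

lemma reduced_kernel_outside:
  assumes "S \<subseteq> {..<N}" "a \<in> configs d S" "b \<in> configs d S"
    and "a \<notin> config_restrict S ` G \<or> b \<notin> config_restrict S ` G"
  shows "reduced_kernel d N psi S a b = 0"
proof -
  have empty: "{h\<in>configs d ({..<N} - S).
      (\<exists>g\<in>G. a = config_restrict S g \<and> h = config_restrict ({..<N} - S) g) \<and>
      (\<exists>g\<in>G. b = config_restrict S g \<and> h = config_restrict ({..<N} - S) g)} = {}"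
    using assms(4) by auto
  show ?thesis using reduced_kernel_eq_card[OF assms(1-3)] unfolding empty by simp
qed

lemma reduced_kernel_if_complement_inj:
  assumes S: "S \<subseteq> {..<N}" and inj: "inj_on (config_restrict ({..<N} - S)) G"
    and a: "a \<in> configs d S" and b: "b \<in> configs d S"
  shows "reduced_kernel d N psi S a b =
    (if a = b then of_nat (card {g\<in>G. config_restrict S g = a}) / of_nat (card G) else 0)"
proof -
  let ?rS = "config_restrict S" and ?rT = "config_restrict ({..<N} - S)"
  let ?H = "{h\<in>configs d ({..<N} - S).
    (\<exists>g\<in>G. a = ?rS g \<and> h = ?rT g) \<and> (\<exists>g\<in>G. b = ?rS g \<and> h = ?rT g)}"
  have "card ?H = (if a = b then card {g\<in>G. ?rS g = a} else 0)"
  proof (cases "a = b")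
    case True
    have "?H = ?rT ` {g\<in>G. ?rS g = a}"
      using True config_restrict_in_configs[OF d_pos] G_configs by auto
    moreover have "inj_on ?rT {g\<in>G. ?rS g = a}" using inj by (rule inj_on_subset) auto
    ultimately show ?thesis using True by (simp add: card_image)
  next
    case False
    then have "?H = {}" using inj by (auto dest: inj_onD)
    with False show ?thesis by (simp only: card.empty if_False)
  qed
  then show ?thesis using reduced_kernel_eq_card[OF S a b] by simp
qed

lemma ent_eq_if_complement_inj:
  assumes S: "S \<subseteq> {..<N}"
    and inj: "inj_on (config_restrict ({..<N} - S)) G"
    and fibre: "\<And>a. a \<in> configs d S \<Longrightarrow> card {g\<in>G. config_restrict S g = a} = \<alpha>"
  shows "ent d N psi S = - log 2 (real \<alpha> / real (card G))"
proof -
  let ?K = "reduced_kernel d N psi S"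
  define v where "v = complex_of_real (real \<alpha> / real (card G))"
  have fS: "finite S" using S finite_subset by blast
  have card_G: "card G = \<alpha> * d ^ card S" by (rule card_G_eq_fibres[OF S fibre])
  then have "0 < \<alpha>" using G_nonempty finite_G by (cases \<alpha>) auto
  have K: "?K a b = (if a = b then v else 0)" if "a \<in> configs d S" "b \<in> configs d S" for a b
    using reduced_kernel_if_complement_inj[OF S inj that] fibre that by (simp add: v_def)
  show ?thesis
  proof (rule ent_eq_scaled_projection_kernel[OF fS d_pos])
    fix a c assume a: "a \<in> configs d S" and c: "c \<in> configs d S"
    have "(\<Sum>b\<in>configs d S. ?K a b * ?K b c) = (\<Sum>b\<in>configs d S. if b = a then ?K a c * v else 0)"
      using a c by (intro sum.cong) (auto simp: K)
    also have "\<dots> = complex_of_real (real \<alpha> / real (card G)) * ?K a c"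
      using a finite_configs[OF fS d_pos] by (simp add: v_def)
    finally show "(\<Sum>b\<in>configs d S. ?K a b * ?K b c) = complex_of_real (real \<alpha> / real (card G)) * ?K a c" .
  next
    have "(\<Sum>a\<in>configs d S. ?K a a) = of_nat (d ^ card S) * v"
      by (simp add: K card_configs[OF fS])
    also have "\<dots> = 1"
      using card_G \<open>0 < \<alpha>\<close> d_pos by (simp add: v_def field_simps)
    finally show "(\<Sum>a\<in>configs d S. ?K a a) = 1" .
  qed (use \<open>0 < \<alpha>\<close> card_G d_pos in simp)
qed

lemma reduced_kernel_if_restriction_inj:
  assumes S: "S \<subseteq> {..<N}" and inj: "inj_on (config_restrict S) G" and "g \<in> G" "g' \<in> G"
  shows "reduced_kernel d N psi S (config_restrict S g) (config_restrict S g') =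
    (if config_restrict ({..<N} - S) g = config_restrict ({..<N} - S) g' then 1 / of_nat (card G) else 0)"
proof -
  let ?rS = "config_restrict S" and ?rT = "config_restrict ({..<N} - S)"
  have rS_in: "?rS h \<in> configs d S" and rT_in: "?rT h \<in> configs d ({..<N} - S)" if "h \<in> G" for h
    using that G_configs config_restrict_in_configs[OF d_pos] by auto
  have "(\<exists>g0\<in>G. ?rS h = ?rS g0 \<and> t = ?rT g0) \<longleftrightarrow> t = ?rT h" if "h \<in> G" for h t
    using that inj by (auto dest: inj_onD)
  then have "{t\<in>configs d ({..<N} - S). (\<exists>g0\<in>G. ?rS g = ?rS g0 \<and> t = ?rT g0) \<and>
      (\<exists>g0\<in>G. ?rS g' = ?rS g0 \<and> t = ?rT g0)} = (if ?rT g = ?rT g' then {?rT g} else {})"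
    using assms(3,4) rT_in by auto
  then show ?thesis using reduced_kernel_eq_card[OF S rS_in rS_in, of g g'] assms(3,4) by simp
qed

lemma ent_eq_if_restriction_inj:
  assumes S: "S \<subseteq> {..<N}"
    and inj: "inj_on (config_restrict S) G"
    and fibre: "\<And>g. g \<in> G \<Longrightarrow>
      card {g'\<in>G. config_restrict ({..<N} - S) g' = config_restrict ({..<N} - S) g} = \<beta>"
  shows "ent d N psi S = - log 2 (real \<beta> / real (card G))"
proof -
  let ?rS = "config_restrict S" and ?rT = "config_restrict ({..<N} - S)"
  let ?K = "reduced_kernel d N psi S"
  define u where "u = 1 / complex_of_nat (card G)"
  have fS: "finite S" using S finite_subset by blast
  note K_img = reduced_kernel_if_restriction_inj[OF S inj, folded u_def]
  note K_out = reduced_kernel_outside[OF S]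
  have sum_img: "(\<Sum>b\<in>configs d S. f b) = (\<Sum>g\<in>G. f (?rS g))"
    if "\<And>b. b \<in> configs d S \<Longrightarrow> b \<notin> ?rS ` G \<Longrightarrow> f b = 0" for f :: "_ \<Rightarrow> complex"
  proof -
    have "(\<Sum>b\<in>configs d S. f b) = (\<Sum>b\<in>?rS ` G. f b)"
      using that G_configs config_restrict_in_configs[OF d_pos] finite_configs[OF fS d_pos]
      by (intro sum.mono_neutral_right) auto
    also have "\<dots> = (\<Sum>g\<in>G. f (?rS g))" by (rule sum.reindex[OF inj, unfolded comp_def])
    finally show ?thesis .
  qed
  obtain g0 where "g0 \<in> G" using G_nonempty by blast
  then have "0 < \<beta>" using fibre[of g0] finite_G by (auto simp: card_gt_0_iff)
  show ?thesis
  proof (rule ent_eq_scaled_projection_kernel[OF fS d_pos])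
    fix a c assume a: "a \<in> configs d S" and c: "c \<in> configs d S"
    show "(\<Sum>b\<in>configs d S. ?K a b * ?K b c) = complex_of_real (real \<beta> / real (card G)) * ?K a c"
    proof (cases "a \<in> ?rS ` G \<and> c \<in> ?rS ` G")
      case True
      then obtain g g'' where g: "g \<in> G" "a = ?rS g" and g'': "g'' \<in> G" "c = ?rS g''" by blast
      have "(\<Sum>b\<in>configs d S. ?K a b * ?K b c) = (\<Sum>g'\<in>G. ?K a (?rS g') * ?K (?rS g') c)"
        using a c by (intro sum_img) (simp add: K_out)
      also have "\<dots> = (\<Sum>g'\<in>G. if ?rT g' = ?rT g then (if ?rT g = ?rT g'' then u * u else 0) else 0)"
        using g g'' by (intro sum.cong) (auto simp: K_img)
      also have "\<dots> = of_nat \<beta> * (if ?rT g = ?rT g'' then u * u else 0)"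
        using fibre[OF g(1)] finite_G by (simp add: sum.inter_filter[symmetric])
      also have "\<dots> = complex_of_real (real \<beta> / real (card G)) * ?K a c"
        using g g'' by (simp add: K_img u_def)
      finally show ?thesis .
    next
      case False
      then have "?K a b * ?K b c = 0" if "b \<in> configs d S" for b
        using that a c K_out by (metis mult_eq_0_iff)
      then show ?thesis using False a c K_out by simp
    qed
  next
    have "(\<Sum>a\<in>configs d S. ?K a a) = (\<Sum>g\<in>G. ?K (?rS g) (?rS g))"
      by (intro sum_img) (simp add: K_out)
    also have "\<dots> = of_nat (card G) * u" by (simp add: K_img)
    also have "\<dots> = 1" using G_nonempty finite_G by (simp add: u_def)
    finally show "(\<Sum>a\<in>configs d S. ?K a a) = 1" .
  qed (use \<open>0 < \<beta>\<close> G_nonempty finite_G in \<open>simp add: card_gt_0_iff\<close>)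
qed

end

section \<open>The Choi state of \<open>U\<^bsub>d,n\<^esub>\<close>\<close>

text \<open>The basis state \<open>|x\<rangle>\<^sub>A |M\<^sub>n x\<rangle>\<^sub>C\<close>; the Choi state of \<open>U\<^bsub>d,n\<^esub>\<close> is the uniform superposition
  of these.\<close>

definition choi_config :: "nat \<Rightarrow> nat \<Rightarrow> (nat \<Rightarrow> nat) \<Rightarrow> nat \<Rightarrow> nat" where
  "choi_config d n x = (\<lambda>k. if k < n then x k else if k < 2 * n then Mvec d n x (k - n) else 0)"

lemma choi_config_input: "k < n \<Longrightarrow> choi_config d n x k = x k"
  by (simp add: choi_config_def)

lemma choi_config_output: "k < n \<Longrightarrow> choi_config d n x (n + k) = Mvec d n x k"
  by (simp add: choi_config_def)

lemma choi_config_in_configs: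
  "0 < d \<Longrightarrow> x \<in> configs d {..<n} \<Longrightarrow> choi_config d n x \<in> configs d {..<2 * n}"
  by (auto simp: choi_config_def configs_def Mvec_def)

lemma inj_on_choi_config: "inj_on (choi_config d n) (configs d {..<n})"
proof (rule inj_onI, rule ext)
  fix x y k assume x: "x \<in> configs d {..<n}" and y: "y \<in> configs d {..<n}"
    and eq: "choi_config d n x = choi_config d n y"
  show "x k = y k"
  proof (cases "k < n")
    case True
    then show ?thesis using fun_cong[OF eq, of k] by (simp add: choi_config_input)
  qed (use x y in \<open>auto simp: configs_def\<close>)
qed

lemma card_choi_support: "card (choi_config d n ` configs d {..<n}) = d ^ n"
  by (simp add: card_image[OF inj_on_choi_config] card_configs)

lemma choi_vec_U_dn:
  assumes d0: "0 < d" and g: "g \<in> configs d {..<2 * n}"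
  shows "choi_vec d n (U_dn d n) g =
    (if g \<in> choi_config d n ` configs d {..<n} then 1 else 0) / complex_of_real (sqrt (real d ^ n))"
proof -
  define x where "x = config_restrict {..<n} g"
  define y where "y = (\<lambda>k. g (n + k))"
  have x: "x \<in> configs d {..<n}" and y: "y \<in> configs d {..<n}"
    using g d0 by (auto simp: x_def y_def config_restrict_def configs_def)
  have "sys_enc d {..<n} g = sys_enc d {..<n} x"
    by (simp add: sys_enc_def x_def config_restrict_def)
  then have "choi_vec d n (U_dn d n) g =
      U_dn d n $$ (sys_enc d {..<n} y, sys_enc d {..<n} x) / complex_of_real (sqrt (real d ^ n))"
    by (simp add: choi_vec_def y_def)
  also have "U_dn d n $$ (sys_enc d {..<n} y, sys_enc d {..<n} x) = (if y = Mvec d n x then 1 else 0)"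
    using bij_betw_apply[OF bij_betw_sys_enc[of "{..<n}" d]] sys_dec_sys_enc[of "{..<n}" d] x y d0
    by (simp add: U_dn_def)
  also have "y = Mvec d n x \<longleftrightarrow> g \<in> choi_config d n ` configs d {..<n}"
  proof
    assume yx: "y = Mvec d n x"
    have "g k = choi_config d n x k" for k
    proof -
      consider "k < n" | "n \<le> k" "k < 2 * n" | "2 * n \<le> k" by linarith
      then show ?thesis
      proof cases
        case 2
        then have "g k = y (k - n)" by (simp add: y_def)
        with 2 yx show ?thesis by (simp add: choi_config_def)
      qed (use g in \<open>auto simp: choi_config_def x_def config_restrict_def configs_def\<close>)
    qed
    with x show "g \<in> choi_config d n ` configs d {..<n}" by blast
  next
    assume "g \<in> choi_config d n ` configs d {..<n}"
    then obtain x' where x': "x' \<in> configs d {..<n}" and gx': "g = choi_config d n x'" by blast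
    have "x = x'"
      using x' by (auto simp: fun_eq_iff x_def gx' config_restrict_def choi_config_def configs_def)
    moreover have "y = Mvec d n x'"
      by (auto simp: fun_eq_iff y_def gx' choi_config_def Mvec_def)
    ultimately show "y = Mvec d n x" by simp
  qed
  finally show ?thesis .
qed

lemma uniform_superposition_choi_vec:
  assumes "0 < d"
  shows "uniform_superposition d (2 * n) (choi_config d n ` configs d {..<n}) (choi_vec d n (U_dn d n))"
proof
  from card_choi_support show "choi_vec d n (U_dn d n) g = (if g \<in> choi_config d n ` configs d {..<n} then 1 else 0) /
      complex_of_real (sqrt (real (card (choi_config d n ` configs d {..<n}))))"
    if "g \<in> configs d {..<2 * n}" for g
    using choi_vec_U_dn[OF assms that] by simp
  have "(\<lambda>_. 0) \<in> configs d {..<n}" using assms by (simp add: configs_def)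
  then show "choi_config d n ` configs d {..<n} \<noteq> {}" by blast
qed (use assms choi_config_in_configs in auto)

lemma minus_log_power_ratio:
  assumes "1 < d" "m \<le> n"
  shows "- log 2 (real (d ^ m) / real (d ^ n)) = real (n - m) * log 2 (real d)"
  using assms by (simp add: log_divide log_nat_power of_nat_diff algebra_simps)

abbreviation choi_entropy :: "nat \<Rightarrow> nat \<Rightarrow> nat set \<Rightarrow> real" where
  "choi_entropy d n S \<equiv> ent d (2 * n) (choi_vec d n (U_dn d n)) S"

lemma card_choi_config_image_Collect:
  "card {g\<in>choi_config d n ` configs d {..<n}. P g} = card {x\<in>configs d {..<n}. P (choi_config d n x)}"
proof -
  have "{g\<in>choi_config d n ` configs d {..<n}. P g} = choi_config d n ` {x\<in>configs d {..<n}. P (choi_config d n x)}"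
    by auto
  then show ?thesis
    using inj_on_choi_config by (simp add: card_image inj_on_subset[of _ "configs d {..<n}"])
qed

lemma choi_entropy_if_complement_inj:
  assumes d: "1 < d" and S: "S \<subseteq> {..<2 * n}" and m: "m \<le> n"
    and inj: "inj_on (\<lambda>x. config_restrict ({..<2 * n} - S) (choi_config d n x)) (configs d {..<n})"
    and fibre: "\<And>a. a \<in> configs d S \<Longrightarrow>
      card {x\<in>configs d {..<n}. config_restrict S (choi_config d n x) = a} = d ^ m"
  shows "choi_entropy d n S = real (n - m) * log 2 (real d)"
proof -
  interpret uniform_superposition d "2 * n" "choi_config d n ` configs d {..<n}" "choi_vec d n (U_dn d n)"
    using d by (intro uniform_superposition_choi_vec) simp
  have "choi_entropy d n S = - log 2 (real (d ^ m) / real (card (choi_config d n ` configs d {..<n})))"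
    using inj fibre by (intro ent_eq_if_complement_inj[OF S])
      (auto intro: inj_on_imageI simp: comp_def card_choi_config_image_Collect)
  also have "\<dots> = - log 2 (real (d ^ m) / real (d ^ n))" by (simp only: card_choi_support)
  also have "\<dots> = real (n - m) * log 2 (real d)" by (rule minus_log_power_ratio[OF d m])
  finally show ?thesis .
qed

lemma choi_entropy_if_restriction_inj:
  assumes d: "1 < d" and S: "S \<subseteq> {..<2 * n}" and m: "m \<le> n"
    and inj: "inj_on (\<lambda>x. config_restrict S (choi_config d n x)) (configs d {..<n})"
    and fibre: "\<And>x. x \<in> configs d {..<n} \<Longrightarrow>
      card {y\<in>configs d {..<n}. config_restrict ({..<2 * n} - S) (choi_config d n y) =
        config_restrict ({..<2 * n} - S) (choi_config d n x)} = d ^ m"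
  shows "choi_entropy d n S = real (n - m) * log 2 (real d)"
proof -
  interpret uniform_superposition d "2 * n" "choi_config d n ` configs d {..<n}" "choi_vec d n (U_dn d n)"
    using d by (intro uniform_superposition_choi_vec) simp
  have "choi_entropy d n S = - log 2 (real (d ^ m) / real (card (choi_config d n ` configs d {..<n})))"
    using inj fibre by (intro ent_eq_if_restriction_inj[OF S])
      (auto intro: inj_on_imageI simp: comp_def card_choi_config_image_Collect)
  also have "\<dots> = - log 2 (real (d ^ m) / real (d ^ n))" by (simp only: card_choi_support)
  also have "\<dots> = real (n - m) * log 2 (real d)" by (rule minus_log_power_ratio[OF d m])
  finally show ?thesis .
qed

lemma inj_on_restrict_choi_config_inputs:
  assumes "{..<n} \<subseteq> T"
  shows "inj_on (\<lambda>x. config_restrict T (choi_config d n x)) (configs d {..<n})"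
proof (rule inj_onI, rule ext)
  fix x y k assume x: "x \<in> configs d {..<n}" and y: "y \<in> configs d {..<n}"
    and e: "config_restrict T (choi_config d n x) = config_restrict T (choi_config d n y)"
  show "x k = y k"
  proof (cases "k < n")
    case True
    with e assms have "choi_config d n x k = choi_config d n y k"
      by (auto simp: config_restrict_eq_iff)
    with True show ?thesis by (simp add: choi_config_input)
  next
    case False
    with x y show ?thesis by (simp add: configs_def)
  qed
qed

lemma inj_on_restrict_choi_config_outputs:
  assumes "prime d" "n + 1 < d" "\<And>k. k < n \<Longrightarrow> n + k \<in> T"
  shows "inj_on (\<lambda>x. config_restrict T (choi_config d n x)) (configs d {..<n})"
proof (rule inj_onI)
  fix x y assume x: "x \<in> configs d {..<n}" and y: "y \<in> configs d {..<n}"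
    and e: "config_restrict T (choi_config d n x) = config_restrict T (choi_config d n y)"
  have "Mvec d n x k = Mvec d n y k" for k
  proof (cases "k < n")
    case True
    with e assms(3) have "choi_config d n x (n + k) = choi_config d n y (n + k)"
      by (simp add: config_restrict_eq_iff)
    with True show ?thesis by (simp add: choi_config_output)
  qed (simp add: Mvec_def)
  then show "x = y" using Mvec_inj_on[OF assms(1,2)] x y by (auto dest: inj_onD)
qed

lemma choi_entropy_inputs:
  assumes p: "prime d" and dn: "n + 1 < d" and S: "S \<subseteq> {..<n}"
  shows "choi_entropy d n S = real (card S) * log 2 (real d)"
proof -
  have cS: "card S \<le> n" using card_mono[OF _ S] by simp
  have "choi_entropy d n S = real (n - (n - card S)) * log 2 (real d)"
  proof (rule choi_entropy_if_complement_inj)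
    show "inj_on (\<lambda>x. config_restrict ({..<2 * n} - S) (choi_config d n x)) (configs d {..<n})"
      using S by (intro inj_on_restrict_choi_config_outputs[OF p dn]) auto
    fix a assume a: "a \<in> configs d S"
    have "{x\<in>configs d {..<n}. config_restrict S (choi_config d n x) = a} =
        {x\<in>configs d {..<n}. \<forall>k\<in>S. x k = a k}"
      using S by (auto simp: config_restrict_eq_config[OF a] choi_config_input subset_iff)
    also have "card \<dots> = d ^ (n - card S)"
      using S a by (subst card_configs_fixed) (auto simp: configs_def card_Diff_subset finite_subset)
    finally show "card {x\<in>configs d {..<n}. config_restrict S (choi_config d n x) = a} = d ^ (n - card S)" .
  qed (use dn S in auto)
  then show ?thesis using cS by simp
qed

lemma choi_entropy_output:
  assumes p: "prime d" and dn: "n + 1 < d" and j: "j < n"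
  shows "choi_entropy d n {n + j} = log 2 (real d)"
proof -
  have "choi_entropy d n {n + j} = real (n - (n - 1)) * log 2 (real d)"
  proof (rule choi_entropy_if_complement_inj)
    show "inj_on (\<lambda>x. config_restrict ({..<2 * n} - {n + j}) (choi_config d n x)) (configs d {..<n})"
      by (rule inj_on_restrict_choi_config_inputs) auto
    fix a assume a: "a \<in> configs d {n + j}"
    have "{x\<in>configs d {..<n}. config_restrict {n + j} (choi_config d n x) = a} =
        {x\<in>configs d {..<n}. (\<forall>k\<in>{}. x k = a k) \<and> Mvec d n x j = a (n + j)}"
      using j by (simp add: config_restrict_eq_config[OF a] choi_config_output)
    also have "card \<dots> = d ^ (n - card ({} :: nat set) - 1)"
      using j dn a by (intro card_configs_fixed_Mvec[OF p, where i = j]) (auto simp: configs_def)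
    finally show "card {x\<in>configs d {..<n}. config_restrict {n + j} (choi_config d n x) = a} = d ^ (n - 1)"
      by simp
  qed (use dn j in auto)
  then show ?thesis using j by simp
qed

lemma choi_entropy_input_output:
  assumes p: "prime d" and dn: "n + 1 < d" and n2: "2 \<le> n" and i: "i < n" and j: "j < n"
  shows "choi_entropy d n {i, n + j} = 2 * log 2 (real d)"
proof -
  have d2: "2 < d" using dn n2 by simp
  let ?T = "{..<2 * n} - {i, n + j}"
  have "choi_entropy d n {i, n + j} = real (n - (n - 2)) * log 2 (real d)"
  proof (rule choi_entropy_if_complement_inj)
    show "inj_on (\<lambda>x. config_restrict ?T (choi_config d n x)) (configs d {..<n})"
    proof (rule inj_onI)
      fix x y assume x: "x \<in> configs d {..<n}" and y: "y \<in> configs d {..<n}"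
        and e: "config_restrict ?T (choi_config d n x) = config_restrict ?T (choi_config d n y)"
      then have agree: "choi_config d n x k = choi_config d n y k" if "k \<in> ?T" for k
        using that by (simp add: config_restrict_eq_iff)
      have off_i: "x k = y k" if "k \<noteq> i" for k
        using agree[of k] x y that by (cases "k < n") (auto simp: choi_config_input configs_def)
      define k1 where "k1 = (if j = 0 then 1 else (0::nat))"
      have k1: "k1 < n" "k1 \<noteq> j" using n2 by (auto simp: k1_def)
      then have "Mvec d n x k1 = Mvec d n y k1"
        using agree[of "n + k1"] i by (simp add: choi_config_output)
      with off_i show "x = y" by (intro Mvec_eq_agree_off_imp_eq[OF p d2 i k1(1) x y])
    qed
    fix a assume a: "a \<in> configs d {i, n + j}"
    define kz where "kz = (if i = 0 then 1 else (0::nat))"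
    have kz: "kz < n" "kz \<noteq> i" using n2 by (auto simp: kz_def)
    have "{x\<in>configs d {..<n}. config_restrict {i, n + j} (choi_config d n x) = a} =
        {x\<in>configs d {..<n}. (\<forall>k\<in>{i}. x k = a k) \<and> Mvec d n x j = a (n + j)}"
      using i j by (simp add: config_restrict_eq_config[OF a] choi_config_input choi_config_output)
    also have "card \<dots> = d ^ (n - card {i} - 1)"
      using i j kz a by (intro card_configs_fixed_Mvec[OF p d2]) (auto simp: configs_def)
    finally show "card {x\<in>configs d {..<n}. config_restrict {i, n + j} (choi_config d n x) = a} =
        d ^ (n - 2)" by (simp add: numeral_2_eq_2)
  qed (use dn i j in auto)
  then show ?thesis using n2 by simp
qed

lemma choi_entropy_co_input_output:
  assumes p: "prime d" and dn: "n + 1 < d" and i: "i < n" and j: "j < n"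
  shows "choi_entropy d n (({..<n} - {i}) \<union> {n + j}) = real n * log 2 (real d)"
proof -
  have d2: "2 < d" using dn i by simp
  let ?S = "({..<n} - {i}) \<union> {n + j}"
  let ?T = "{..<2 * n} - ?S"
  have "choi_entropy d n ?S = real (n - 0) * log 2 (real d)"
  proof (rule choi_entropy_if_complement_inj)
    show "inj_on (\<lambda>x. config_restrict ?T (choi_config d n x)) (configs d {..<n})"
    proof (rule inj_onI)
      fix x y assume x: "x \<in> configs d {..<n}" and y: "y \<in> configs d {..<n}"
        and e: "config_restrict ?T (choi_config d n x) = config_restrict ?T (choi_config d n y)"
      then have agree: "choi_config d n x k = choi_config d n y k" if "k \<in> ?T" for k
        using that by (simp add: config_restrict_eq_iff)
      have "x i = y i" using agree[of i] i by (simp add: choi_config_input)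
      moreover have "Mvec d n x k = Mvec d n y k" if "k < n" "k \<noteq> j" for k
        using agree[of "n + k"] that by (simp add: choi_config_output)
      ultimately show "x = y" by (rule Mvec_inj_on_minor[OF p dn i j x y])
    qed
    fix a assume a: "a \<in> configs d ?S"
    have "{x\<in>configs d {..<n}. config_restrict ?S (choi_config d n x) = a} =
        {x\<in>configs d {..<n}. (\<forall>k\<in>{..<n} - {i}. x k = a k) \<and> Mvec d n x j = a (n + j)}"
      unfolding config_restrict_eq_config[OF a] using j by (auto simp: choi_config_input choi_config_output)
    also have "card \<dots> = d ^ (n - card ({..<n} - {i}) - 1)"
      using i j a by (intro card_configs_fixed_Mvec[OF p d2]) (auto simp: configs_def)
    finally show "card {x\<in>configs d {..<n}. config_restrict ?S (choi_config d n x) = a} = d ^ 0"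
      using i by simp
  qed (use dn i j in auto)
  then show ?thesis by simp
qed

lemma config_restrict_choi_config_outputs_eq_iff:
  "config_restrict ({..<2 * n} - ({..<n} \<union> {n + j})) (choi_config d n y) =
      config_restrict ({..<2 * n} - ({..<n} \<union> {n + j})) (choi_config d n x) \<longleftrightarrow>
    (\<forall>k\<in>{..<n} - {j}. Mvec d n y k = Mvec d n x k)"
  (is "_ \<longleftrightarrow> ?M")
  unfolding config_restrict_eq_iff
proof
  assume agree: "\<forall>k\<in>{..<2 * n} - ({..<n} \<union> {n + j}). choi_config d n y k = choi_config d n x k"
  show ?M
  proof
    fix k assume "k \<in> {..<n} - {j}"
    with agree have "choi_config d n y (n + k) = choi_config d n x (n + k)" by auto
    with \<open>k \<in> {..<n} - {j}\<close> show "Mvec d n y k = Mvec d n x k" by (simp add: choi_config_output)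
  qed
next
  assume M: ?M
  show "\<forall>k\<in>{..<2 * n} - ({..<n} \<union> {n + j}). choi_config d n y k = choi_config d n x k"
  proof
    fix k assume "k \<in> {..<2 * n} - ({..<n} \<union> {n + j})"
    then have k: "k = n + (k - n)" "k - n \<in> {..<n} - {j}" by auto
    then have "Mvec d n y (k - n) = Mvec d n x (k - n)" using M by blast
    with k show "choi_config d n y k = choi_config d n x k"
      by (metis DiffD1 choi_config_output lessThan_iff)
  qed
qed

lemma choi_entropy_inputs_output:
  assumes p: "prime d" and dn: "n + 1 < d" and j: "j < n"
  shows "choi_entropy d n ({..<n} \<union> {n + j}) = real (n - 1) * log 2 (real d)"
proof (rule choi_entropy_if_restriction_inj)
  let ?S = "{..<n} \<union> {n + j}"
  let ?T = "{..<2 * n} - ?S"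
  let ?X = "configs d {..<n}"
  show "inj_on (\<lambda>x. config_restrict ?S (choi_config d n x)) ?X"
    by (rule inj_on_restrict_choi_config_inputs) auto
  fix x assume x: "x \<in> ?X"
  note outputs_agree = config_restrict_choi_config_outputs_eq_iff[of n j d _ x]
  have "card {y\<in>?X. config_restrict ?T (choi_config d n y) = config_restrict ?T (choi_config d n x)} =
      card {y\<in>?X. \<forall>k\<in>{..<n} - {j}. Mvec d n y k = Mvec d n x k}" by (simp only: outputs_agree)
  also have "\<dots> = d ^ 1" by (simp add: card_Mvec_agree_off[OF p dn j x])
  finally show "card {y\<in>?X. config_restrict ?T (choi_config d n y) = config_restrict ?T (choi_config d n x)} = d ^ 1" .
next
  show "{..<n} \<union> {n + j} \<subseteq> {..<2 * n}" using j by auto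
qed (use dn j in simp_all)

lemma tripartite_info_choi_vec:
  assumes p: "prime d" and dn: "n + 1 < d" and i: "i < n" and j: "j < n"
  shows "tripartite_info d (2 * n) (choi_vec d n (U_dn d n)) {i} ({..<n} - {i}) {n + j} =
    - choi_entropy d n {i, n + j}"
proof -
  have "{i} \<union> ({..<n} - {i}) = {..<n}" "{i} \<union> {n + j} = {i, n + j}"
    "({..<n} - {i}) \<union> {n + j} \<union> {i} = {..<n} \<union> {n + j}" using i by auto
  then show ?thesis
    using choi_entropy_inputs[OF p dn, of "{i}"] choi_entropy_inputs[OF p dn, of "{..<n} - {i}"]
      choi_entropy_inputs[OF p dn, of "{..<n}"] choi_entropy_output[OF p dn j]
      choi_entropy_co_input_output[OF p dn i j] choi_entropy_inputs_output[OF p dn j] i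
    by (simp add: tripartite_info_def mutual_info_def Un_commute of_nat_diff algebra_simps)
qed

theorem proposition13:
  fixes n d :: nat
  assumes "n \<ge> 1" and "prime d" and "d > n + 1"
  shows "unitary_mat (U_dn d n) \<and>
    (\<forall>i<n. \<forall>j<n.
       tripartite_info d (2 * n) (choi_vec d n (U_dn d n))
         {i} ({..<n} - {i}) {n + j}
       = - 2 * log 2 (real (Min {d, d ^ (n - 1), d, d ^ (n - 1)})))"
proof (intro conjI allI impI)
  note n1 = assms(1) and p = assms(2)
  show "unitary_mat (U_dn d n)" by (rule unitary_U_dn[OF p assms(3)])
  fix i j assume i: "i < n" and j: "j < n"
  have Min: "Min {d, d ^ (n - 1), d, d ^ (n - 1)} = min d (d ^ (n - 1))" by simp
  show "tripartite_info d (2 * n) (choi_vec d n (U_dn d n)) {i} ({..<n} - {i}) {n + j} =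
      - 2 * log 2 (real (Min {d, d ^ (n - 1), d, d ^ (n - 1)}))"
    unfolding tripartite_info_choi_vec[OF p assms(3) i j] Min
  proof (cases "n = 1")
    case True
    then have "{i, n + j} = {..<n} \<union> {n + j}" using i by auto
    then show "- choi_entropy d n {i, n + j} = - 2 * log 2 (real (min d (d ^ (n - 1))))"
      using choi_entropy_inputs_output[OF p assms(3) j] True assms(3) by simp
  next
    case False
    then have "min d (d ^ (n - 1)) = d"
      using n1 assms(3) by (simp add: min_def self_le_power)
    then show "- choi_entropy d n {i, n + j} = - 2 * log 2 (real (min d (d ^ (n - 1))))"
      using choi_entropy_input_output[OF p assms(3) _ i j] n1 False by simp
  qed
qed

end
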